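(* Let $n$ be sufficiently large, let $f\colon\{0,1\}^n\to\{0,1\}$, let $\widetilde{\epsilon}>0$, let $t,r\in[\Lambda]$ with $t\ge r$, and let $H$ be a power of $2$ with $H=O(n/\widetilde{\epsilon}^2)$ and $H2^t\ge\sqrt n$, $H2^r\ge\sqrt n$. Let $I\subseteq[n]$ be nonempty with $|I|\ge H\widetilde{\epsilon}^2/2$, and suppose every $i\in I$ satisfies \[\min\{\mathrm{Score}_i^+,\mathrm{Score}_i^-\}=\min\Big\{\mathrm{Score}^+_{i,t}\cdot\tfrac{2^t}{\sqrt n},\ \mathrm{Score}^-_{i,r}\cdot\tfrac{2^r}{\sqrt n}\Big\}\in\big[1/H,\,2/H\big].\] Let $\alpha=|I|2^t/n$ and $\beta=|I|2^r/n$. Then for each $i\in I$, at least a $1/8$ fraction of the sets $S\in\mathcal{P}_{i,t}$ are informative for the $i$th coordinate.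
   Context: For $x\in\{0,1\}^n$ and $i\in[n]$, $x^{(i)}$ denotes $x$ with its $i$th bit flipped. An edge $(x,x^{(i)})$ of the hypercube is monotone if $f$ strictly increases along it in direction $i$ (from the endpoint with $i$th bit $0$ to the endpoint with $i$th bit $1$), and anti-monotone if $f$ strictly decreases along it; $E_i^+$ and $E_i^-$ denote the monotone and anti-monotone edges in direction $i$. $\textsc{AE-Search}$ is a fixed randomized query procedure that, on input a point $x\in\{0,1\}^n$ and a set $S\subseteq[n]$, outputs either an index in $S$ or nothing. $\Lambda=O(\log n)$ is a fixed positive integer parameter with $2^j\le n$ for all $j\in[\Lambda]$. For $i\in[n]$ and $j\in[\Lambda]$, $\mathcal{P}_{i,j}$ is the family of subsets of $[n]\setminus\{i\}$ of size $2^j-1$. A pair $(x,S)$ with $S\subseteq[n]\setminus\{i\}$ is a good pair for $E_i^+$ (resp. $E_i^-$) if $(x,x^{(i)})$ is a monotone (resp. anti-monotone) edge and $\textsc{AE-Search}(x,S\cup\{i\})$ returns $i$ with probability at least $1/2$. $\mathrm{Good}_i^{\pm}(S)$ is the set of $x$ with $(x,S)$ good for $E_i^\pm$, and $\mathrm{GoodFrac}_i^\pm(S)=|\mathrm{Good}_i^\pm(S)|/2^n$. A point $x$ is $j$-strong for $E_i^\pm$ if $(x,S)$ is good for $E_i^\pm$ for at least $3/4$ of the sets $S\in\mathcal{P}_{i,j}$; $\mathrm{Score}^\pm_{i,j}$ is the fraction of $x\in\{0,1\}^n$ that are $j$-strong for $E_i^\pm$, and $\mathrm{Score}_i^\pm=\max_{j\in[\Lambda]}\mathrm{Score}^\pm_{i,j}\cdot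 2^j/\sqrt n$. A set $S\in\mathcal{P}_{i,t}$ ($i\in I$) is informative for the $i$th coordinate if (1) $\mathrm{GoodFrac}_i^+(S)\ge 0.1\,\widetilde{\epsilon}^2/(\alpha\sqrt n)$, and (2) at least a $0.1$ fraction of the $(2^r-1)$-sized subsets $T\subseteq S$ satisfy $\mathrm{GoodFrac}_i^-(T)\ge 0.1\,\widetilde{\epsilon}^2/(\beta\sqrt n)$. *)

theory Defs
  imports "HOL-Probability.Probability"
begin

text \<open>Points of the hypercube {0,1}^n are encoded as subsets x of {..<n}
  (bit i of x is 1 iff i is in x); coordinates [n] are {..<n}.
  AES-Search is modelled by a parameter AES n f x S giving the output
  distribution (None = outputs nothing) of the procedure on input (x, S).\<close>

definition cube :: "nat \<Rightarrow> nat set set" where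
  "cube n = Pow {..<n}"

definition flip :: "nat set \<Rightarrow> nat \<Rightarrow> nat set" where
  "flip x i = (if i \<in> x then x - {i} else insert i x)"

text \<open>pos = True: monotone edge (f strictly increases in direction i);
  pos = False: anti-monotone edge.\<close>
definition dir_edge :: "(nat set \<Rightarrow> bool) \<Rightarrow> bool \<Rightarrow> nat \<Rightarrow> nat set \<Rightarrow> bool" where
  "dir_edge f pos i x =
     (let lo = x - {i}; hi = insert i x in
      if pos then (\<not> f lo \<and> f hi) else (f lo \<and> \<not> f hi))"

definition Pfam :: "nat \<Rightarrow> nat \<Rightarrow> nat \<Rightarrow> nat set set" where
  "Pfam n i j = {S. S \<subseteq> {..<n} - {i} \<and> card S = 2^j - 1}"

definition good_pair ::
  "(nat \<Rightarrow> (nat set \<Rightarrow> bool) \<Rightarrow> nat set \<Rightarrow> nat set \<Rightarrow> nat option pmf)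
   \<Rightarrow> nat \<Rightarrow> (nat set \<Rightarrow> bool) \<Rightarrow> bool \<Rightarrow> nat \<Rightarrow> nat set \<Rightarrow> nat set \<Rightarrow> bool" where
  "good_pair AES n f pos i x S =
     (S \<subseteq> {..<n} - {i} \<and> dir_edge f pos i x \<and>
      pmf (AES n f x (insert i S)) (Some i) \<ge> 1/2)"

definition Good where
  "Good AES n f pos i S = {x \<in> cube n. good_pair AES n f pos i x S}"

definition GoodFrac :: "_ \<Rightarrow> nat \<Rightarrow> _ \<Rightarrow> bool \<Rightarrow> nat \<Rightarrow> nat set \<Rightarrow> real" where
  "GoodFrac AES n f pos i S = real (card (Good AES n f pos i S)) / 2^n"

definition strong where
  "strong AES n f pos i j x =
     (x \<in> cube n \<and>
      real (card {S \<in> Pfam n i j. good_pair AES n f pos i x S}) \<ge> 3/4 * real (card (Pfam n i j)))"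

definition ScoreJ :: "_ \<Rightarrow> nat \<Rightarrow> _ \<Rightarrow> bool \<Rightarrow> nat \<Rightarrow> nat \<Rightarrow> real" where
  "ScoreJ AES n f pos i j = real (card {x \<in> cube n. strong AES n f pos i j x}) / 2^n"

definition Score :: "_ \<Rightarrow> nat \<Rightarrow> _ \<Rightarrow> nat \<Rightarrow> bool \<Rightarrow> nat \<Rightarrow> real" where
  "Score AES n f \<Lambda> pos i = Max ((\<lambda>j. ScoreJ AES n f pos i j * 2^j / sqrt n) ` {1..\<Lambda>})"

definition informative ::
  "_ \<Rightarrow> nat \<Rightarrow> _ \<Rightarrow> real \<Rightarrow> real \<Rightarrow> real \<Rightarrow> nat \<Rightarrow> nat \<Rightarrow> nat set \<Rightarrow> bool" where
  "informative AES n f \<epsilon> \<alpha> \<beta> r i S =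
     (GoodFrac AES n f True i S \<ge> 0.1 * \<epsilon>^2 / (\<alpha> * sqrt n) \<and>
      real (card {T. T \<subseteq> S \<and> card T = 2^r - 1 \<and>
                      GoodFrac AES n f False i T \<ge> 0.1 * \<epsilon>^2 / (\<beta> * sqrt n)})
        \<ge> 0.1 * real (card {T. T \<subseteq> S \<and> card T = 2^r - 1}))"

end

(* Every t-strong point is good for 3/4 of the sets S in P_{i,t}, so double counting
   shows that 11/16 of these S are good for at least a fifth of the t-strong points; the score
   bound Score^+_{i,t} 2^t / sqrt n >= 1/H together with |I| >= H eps^2 / 2 makes this fifth at
   least the first threshold of informativeness. The same argument at level r gives 11/16 of
   the (2^r-1)-sets T above the second threshold, and since a uniformly random (2^t-1)-set has a
   uniformly random (2^r-1)-subset, averaging shows that more than 7/16 of the S contain a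
   0.1 fraction of such T. The two families of S overlap in at least 1/8 of P_{i,t}. *)
theory Submission
  imports Defs
begin

lemma card_filter_eq_sum:
  assumes "finite A"
  shows "real (card {x\<in>A. P x}) = (\<Sum>x\<in>A. if P x then 1 else 0)"
  using assms by (simp add: sum.If_cases Int_def)

lemma card_light_sets_le:
  fixes \<delta> \<mu> c :: real
  assumes fX: "finite X" and fP: "finite P" and sub: "Str \<subseteq> X" and ne: "Str \<noteq> {}"
    and str: "\<forall>x\<in>Str. (1 - \<delta>) * real (card P) \<le> real (card {S\<in>P. G x S})"
    and c: "c \<le> \<mu> * real (card Str)"
  shows "(1 - \<mu>) * real (card {S\<in>P. real (card {x\<in>X. G x S}) < c}) \<le> \<delta> * real (card P)"
proof -
  define F where "F = {S\<in>P. real (card {x\<in>X. G x S}) < c}"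
  have fF: "finite F" and FP: "F \<subseteq> P" using fP by (auto simp: F_def)
  have fS: "finite Str" using fX sub finite_subset by blast
  have many: "real (card F) - \<delta> * real (card P) \<le> real (card {S\<in>F. G x S})" if "x \<in> Str" for x
  proof -
    have "card {S\<in>P. G x S} \<le> card ({S\<in>F. G x S} \<union> (P - F))"
      by (intro card_mono) (use fP fF in auto)
    also have "\<dots> \<le> card {S\<in>F. G x S} + card (P - F)" by (rule card_Un_le)
    finally have "real (card {S\<in>P. G x S}) \<le> real (card {S\<in>F. G x S}) + real (card P) - real (card F)"
      using card_Diff_subset[OF fF FP] card_mono[OF fP FP] by linarith
    moreover have "(1 - \<delta>) * real (card P) \<le> real (card {S\<in>P. G x S})" using str that by blast
    ultimately show ?thesis by (simp add: algebra_simps)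
  qed
  have few: "real (card {x\<in>Str. G x S}) \<le> \<mu> * real (card Str)" if "S \<in> F" for S
  proof -
    have "card {x\<in>Str. G x S} \<le> card {x\<in>X. G x S}" by (intro card_mono) (use fX sub in auto)
    then show ?thesis using that c by (auto simp: F_def)
  qed
  have "real (card Str) * (real (card F) - \<delta> * real (card P))
        \<le> (\<Sum>x\<in>Str. real (card {S\<in>F. G x S}))"
    using sum_mono[of Str "\<lambda>_. real (card F) - \<delta> * real (card P)", OF many] by simp
  also have "\<dots> = (\<Sum>S\<in>F. real (card {x\<in>Str. G x S}))"
    using fS fF by (simp add: card_filter_eq_sum sum.swap[of _ Str F])
  also have "\<dots> \<le> real (card Str) * (\<mu> * real (card F))"
    using sum_mono[of F "\<lambda>S. real (card {x\<in>Str. G x S})" "\<lambda>_. \<mu> * real (card Str)", OF few]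
    by (simp add: mult_ac)
  finally have "real (card F) - \<delta> * real (card P) \<le> \<mu> * real (card F)"
    using ne fS by (simp add: mult_le_cancel_left_pos card_gt_0_iff)
  then show ?thesis by (simp add: F_def algebra_simps)
qed

lemma card_supersets:
  assumes fU: "finite U" and T: "T \<subseteq> U" "card T = b" and ba: "b \<le> a"
  shows "card {S. S \<subseteq> U \<and> card S = a \<and> T \<subseteq> S} = (card U - b) choose (a - b)"
proof -
  have fT: "finite T" using fU T finite_subset by blast
  have "bij_betw (\<lambda>A. A \<union> T) {A. A \<subseteq> U - T \<and> card A = a - b} {S. S \<subseteq> U \<and> card S = a \<and> T \<subseteq> S}"
  proof (rule bij_betw_byWitness[where f' = "\<lambda>S. S - T"])
    show "(\<lambda>A. A \<union> T) ` {A. A \<subseteq> U - T \<and> card A = a - b} \<subseteq> {S. S \<subseteq> U \<and> card S = a \<and> T \<subseteq> S}"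
    proof safe
      fix A assume A: "A \<subseteq> U - T" "card A = a - b"
      then have "finite A" using fU finite_subset by blast
      then have "card (A \<union> T) = card A + card T" using A fT by (intro card_Un_disjoint) auto
      then show "card (A \<union> T) = a" using A T ba by simp
    qed (use T in auto)
    show "(\<lambda>S. S - T) ` {S. S \<subseteq> U \<and> card S = a \<and> T \<subseteq> S} \<subseteq> {A. A \<subseteq> U - T \<and> card A = a - b}"
      using card_Diff_subset[OF fT] T by auto
  qed auto
  then have "card {S. S \<subseteq> U \<and> card S = a \<and> T \<subseteq> S} = card {A. A \<subseteq> U - T \<and> card A = a - b}"
    by (simp add: bij_betw_same_card)
  also have "\<dots> = card (U - T) choose (a - b)" using fU by (simp add: n_subsets)
  finally show ?thesis using card_Diff_subset[OF fT T(1)] T by simp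
qed

text \<open>Each b-subset of U lies in the same number of a-subsets of U, so double counting
  the incidences T \<subseteq> S turns the sum into a multiple of the number of good b-subsets.\<close>
lemma sum_card_subsets_of_subsets:
  assumes fU: "finite U" and ba: "b \<le> a"
  shows "(\<Sum>S\<in>{S. S \<subseteq> U \<and> card S = a}. real (card {T. T \<subseteq> S \<and> card T = b \<and> Q T}))
         = real (card {T. T \<subseteq> U \<and> card T = b \<and> Q T}) * real ((card U - b) choose (a - b))"
proof -
  define P where "P = {S. S \<subseteq> U \<and> card S = a}"
  define P' where "P' = {T. T \<subseteq> U \<and> card T = b}"
  define m where "m = (card U - b) choose (a - b)"
  have fP: "finite P" and fP': "finite P'" using fU by (simp_all add: P_def P'_def)
  have inner: "real (card {T. T \<subseteq> S \<and> card T = b \<and> Q T}) = (\<Sum>T\<in>P'. if T \<subseteq> S \<and> Q T then 1 else 0)"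
    if "S \<in> P" for S
  proof -
    have "{T. T \<subseteq> S \<and> card T = b \<and> Q T} = {T\<in>P'. T \<subseteq> S \<and> Q T}"
      using that by (auto simp: P_def P'_def)
    then show ?thesis using card_filter_eq_sum[OF fP'] by simp
  qed
  have outer: "(\<Sum>S\<in>P. (if T \<subseteq> S \<and> Q T then 1 else 0 :: real)) = (if Q T then 1 else 0) * real m"
    if "T \<in> P'" for T
  proof -
    have "{S\<in>P. T \<subseteq> S} = {S. S \<subseteq> U \<and> card S = a \<and> T \<subseteq> S}" by (auto simp: P_def)
    then have "card {S\<in>P. T \<subseteq> S} = m"
      using that ba by (auto simp: m_def P'_def intro!: card_supersets[OF fU])
    then show ?thesis using card_filter_eq_sum[OF fP, of "\<lambda>S. T \<subseteq> S"] by simp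
  qed
  have "(\<Sum>S\<in>P. real (card {T. T \<subseteq> S \<and> card T = b \<and> Q T})) =
        (\<Sum>T\<in>P'. \<Sum>S\<in>P. (if T \<subseteq> S \<and> Q T then 1 else 0 :: real))"
    by (simp add: inner sum.swap[of _ P P'])
  also have "\<dots> = real (card {T\<in>P'. Q T}) * real m"
    by (simp add: outer card_filter_eq_sum[OF fP'] sum_distrib_right)
  finally show ?thesis by (simp add: P_def P'_def m_def conj_assoc)
qed

lemma card_ge_threshold_of_average:
  fixes g :: "'a \<Rightarrow> real"
  assumes fP: "finite P" and le1: "\<forall>S\<in>P. g S \<le> 1" and avg: "\<rho> * real (card P) \<le> (\<Sum>S\<in>P. g S)"
  shows "(\<rho> - \<gamma>) * real (card P) \<le> (1 - \<gamma>) * real (card {S\<in>P. \<gamma> \<le> g S})"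
proof -
  define G where "G = {S\<in>P. \<gamma> \<le> g S}"
  have GP: "G \<subseteq> P" by (auto simp: G_def)
  have "(\<Sum>S\<in>P. g S) \<le> (\<Sum>S\<in>P. if S \<in> G then 1 else \<gamma>)"
    using le1 by (intro sum_mono) (auto simp: G_def)
  also have "\<dots> = real (card G) + \<gamma> * real (card (P - G))"
    using fP GP by (simp add: sum.If_cases Int_absorb1 Int_commute[of _ P] Diff_eq mult.commute)
  also have "\<dots> = real (card G) + \<gamma> * (real (card P) - real (card G))"
    using card_Diff_subset[OF finite_subset[OF GP fP] GP] card_mono[OF fP GP] by (simp add: of_nat_diff)
  finally show ?thesis using avg by (simp add: G_def algebra_simps)
qed

lemma card_dense_supersets:
  fixes \<rho> \<gamma> :: real
  assumes fU: "finite U" and ba: "b \<le> a"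
    and dense: "\<rho> * real (card {T. T \<subseteq> U \<and> card T = b}) \<le> real (card {T. T \<subseteq> U \<and> card T = b \<and> Q T})"
  shows "(\<rho> - \<gamma>) * real (card {S. S \<subseteq> U \<and> card S = a}) \<le>
    (1 - \<gamma>) * real (card {S\<in>{S. S \<subseteq> U \<and> card S = a}.
       \<gamma> * real (card {T. T \<subseteq> S \<and> card T = b}) \<le> real (card {T. T \<subseteq> S \<and> card T = b \<and> Q T})})"
proof -
  define P where "P = {S. S \<subseteq> U \<and> card S = a}"
  define k where "k = real (a choose b)"
  define m where "m = real ((card U - b) choose (a - b))"
  define cnt where "cnt S = real (card {T. T \<subseteq> S \<and> card T = b \<and> Q T})" for S
  have fP: "finite P" using fU by (simp add: P_def)
  have kpos: "k > 0" using ba by (simp add: k_def)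
  have card_b_subsets: "card {T. T \<subseteq> S \<and> card T = b} = a choose b" if "S \<in> P" for S
  proof -
    have "finite S" using that fU finite_subset by (auto simp: P_def)
    then show ?thesis using that by (simp add: P_def n_subsets)
  qed
  have cnt_le: "cnt S \<le> k" if "S \<in> P" for S
  proof -
    have "finite S" using that fU finite_subset by (auto simp: P_def)
    then have "card {T. T \<subseteq> S \<and> card T = b \<and> Q T} \<le> card {T. T \<subseteq> S \<and> card T = b}"
      by (intro card_mono) auto
    then show ?thesis using card_b_subsets[OF that] by (simp add: cnt_def k_def)
  qed
  have "k * real (card P) = real (card {T. T \<subseteq> U \<and> card T = b}) * m"
    using sum_card_subsets_of_subsets[OF fU ba, of "\<lambda>_. True"] card_b_subsets
    by (simp add: P_def k_def m_def mult.commute)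
  then have "\<rho> * (k * real (card P)) \<le> (\<Sum>S\<in>P. cnt S)"
    using mult_right_mono[OF dense, of m] sum_card_subsets_of_subsets[OF fU ba, of Q]
    by (simp add: P_def m_def cnt_def mult.assoc)
  then have "\<rho> * real (card P) \<le> (\<Sum>S\<in>P. cnt S / k)"
    using kpos by (simp add: sum_divide_distrib[symmetric] pos_le_divide_eq mult_ac)
  then have "(\<rho> - \<gamma>) * real (card P) \<le> (1 - \<gamma>) * real (card {S\<in>P. \<gamma> \<le> cnt S / k})"
    using cnt_le kpos by (intro card_ge_threshold_of_average[OF fP]) auto
  also have "{S\<in>P. \<gamma> \<le> cnt S / k} =
      {S\<in>P. \<gamma> * real (card {T. T \<subseteq> S \<and> card T = b}) \<le> cnt S}"
    using kpos card_b_subsets by (auto simp: pos_le_divide_eq k_def)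
  finally show ?thesis by (simp add: P_def cnt_def)
qed

lemma threshold_le_score_div_5:
  fixes n k H e s p :: real
  assumes n: "n > 0" and k: "k > 0" and H: "H > 0" and p: "p > 0"
    and kH: "H * e^2 / 2 \<le> k" and score: "1 / H \<le> s * p / sqrt n"
  shows "0.1 * e^2 / (k * p / n * sqrt n) \<le> s / 5"
proof -
  have sq: "sqrt n > 0" and n_div_sqrt: "n / sqrt n = sqrt n" using n by (simp_all add: real_div_sqrt)
  have "0.1 * e^2 / (k * p / n * sqrt n) = 0.1 * e^2 * (n / sqrt n) / (k * p)"
    using n sq k p by (simp add: field_simps)
  also have "\<dots> = 0.1 * e^2 * sqrt n / (k * p)" by (simp only: n_div_sqrt)
  also have "\<dots> \<le> 0.1 * (2 * k / H) * sqrt n / (k * p)"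
    using kH H k p sq by (intro divide_right_mono mult_right_mono mult_left_mono) (auto simp: field_simps)
  also have "\<dots> = 0.2 * (sqrt n / (H * p))" using k H by (simp add: field_simps)
  also have "\<dots> \<le> 0.2 * s" using score H p sq by (simp add: field_simps)
  finally show ?thesis by simp
qed

text \<open>Each j-strong point is good for 3/4 of the sets in Pfam, so by double counting at most
  5/16 of these sets can have fewer than a fifth of the strong points good for them.\<close>
lemma card_GoodFrac_ge:
  assumes th: "\<theta> \<le> ScoreJ AES n f pos i j / 5" and score: "ScoreJ AES n f pos i j > 0"
  shows "11/16 * real (card (Pfam n i j)) \<le> real (card {S\<in>Pfam n i j. \<theta> \<le> GoodFrac AES n f pos i S})"
proof -
  define P where "P = Pfam n i j"
  define Str where "Str = {x\<in>cube n. strong AES n f pos i j x}"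
  define F where "F = {S\<in>P. real (card {x\<in>cube n. good_pair AES n f pos i x S}) < \<theta> * 2^n}"
  have fP: "finite P" by (simp add: P_def Pfam_def)
  have card_Str: "real (card Str) = ScoreJ AES n f pos i j * 2^n" by (simp add: ScoreJ_def Str_def)
  then have ne: "Str \<noteq> {}" using score by auto
  have "(1 - 1/5) * real (card F) \<le> 1/4 * real (card P)"
    unfolding F_def
  proof (rule card_light_sets_le)
    show "\<forall>x\<in>Str. (1 - 1/4) * real (card P) \<le> real (card {S\<in>P. good_pair AES n f pos i x S})"
      by (auto simp: P_def Str_def strong_def)
    show "\<theta> * 2^n \<le> 1/5 * real (card Str)" using th card_Str by simp
  qed (use ne in \<open>auto simp: fP Str_def cube_def\<close>)
  moreover have "{S\<in>P. \<theta> \<le> GoodFrac AES n f pos i S} = P - F"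
    by (auto simp: F_def GoodFrac_def Good_def pos_le_divide_eq)
  moreover have "card (P - F) = card P - card F" and "card F \<le> card P"
    using fP by (auto simp: F_def intro!: card_Diff_subset card_mono)
  ultimately show ?thesis by (simp add: P_def of_nat_diff)
qed

text \<open>Union bound: 11/16 of the sets satisfy the first condition of informativeness and,
  by averaging over subsets, at least (11/16 - 1/10) / (9/10) > 7/16 satisfy the second.\<close>
lemma card_informative_ge:
  fixes k H :: real
  assumes n: "n > 0" and k: "k > 0" and H: "H > 0" and kH: "H * \<epsilon>^2 / 2 \<le> k" and rt: "r \<le> t"
    and score_pos: "1 / H \<le> ScoreJ AES n f True i t * 2^t / sqrt n"
    and score_neg: "1 / H \<le> ScoreJ AES n f False i r * 2^r / sqrt n"
  shows "1/8 * real (card (Pfam n i t)) \<le>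
    real (card {S\<in>Pfam n i t. informative AES n f \<epsilon> (k * 2^t / n) (k * 2^r / n) r i S})"
proof -
  define \<theta>\<^sub>1 where "\<theta>\<^sub>1 = 0.1 * \<epsilon>^2 / (k * 2^t / n * sqrt n)"
  define \<theta>\<^sub>2 where "\<theta>\<^sub>2 = 0.1 * \<epsilon>^2 / (k * 2^r / n * sqrt n)"
  define P where "P = Pfam n i t"
  define A where "A = {S\<in>P. \<theta>\<^sub>1 \<le> GoodFrac AES n f True i S}"
  define B where "B = {S\<in>P. 0.1 * real (card {T. T \<subseteq> S \<and> card T = 2^r - 1}) \<le>
      real (card {T. T \<subseteq> S \<and> card T = 2^r - 1 \<and> \<theta>\<^sub>2 \<le> GoodFrac AES n f False i T})}"
  have "0 < 1 / H" using H by simp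
  then have "0 < ScoreJ AES n f True i t * 2^t / sqrt n" and "0 < ScoreJ AES n f False i r * 2^r / sqrt n"
    using score_pos score_neg by linarith+
  then have pos_score: "ScoreJ AES n f True i t > 0" and neg_score: "ScoreJ AES n f False i r > 0"
    using n by (simp_all add: zero_less_divide_iff zero_less_mult_iff)
  have pos_threshold: "\<theta>\<^sub>1 \<le> ScoreJ AES n f True i t / 5"
    unfolding \<theta>\<^sub>1_def by (rule threshold_le_score_div_5[OF _ k H _ kH score_pos]) (use n in simp_all)
  have neg_threshold: "\<theta>\<^sub>2 \<le> ScoreJ AES n f False i r / 5"
    unfolding \<theta>\<^sub>2_def by (rule threshold_le_score_div_5[OF _ k H _ kH score_neg]) (use n in simp_all)
  have A: "11/16 * real (card P) \<le> real (card A)"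
    unfolding A_def P_def using card_GoodFrac_ge[OF pos_threshold pos_score] .
  have dense: "11/16 * real (card (Pfam n i r)) \<le>
      real (card {T\<in>Pfam n i r. \<theta>\<^sub>2 \<le> GoodFrac AES n f False i T})"
    using card_GoodFrac_ge[OF neg_threshold neg_score] .
  have "2^r - 1 \<le> (2::nat)^t - 1" using rt by (simp add: diff_le_mono power_increasing)
  then have B: "(11/16 - 0.1) * real (card P) \<le> (1 - 0.1) * real (card B)"
    unfolding B_def P_def Pfam_def
    by (rule card_dense_supersets[rotated]) (use dense in \<open>simp_all add: Pfam_def conj_assoc\<close>)
  have fP: "finite P" and AP: "A \<subseteq> P" and BP: "B \<subseteq> P" by (auto simp: P_def Pfam_def A_def B_def)
  then have "real (card (A \<union> B)) + real (card (A \<inter> B)) = real (card A) + real (card B)"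
    using card_Un_Int[OF finite_subset[OF AP fP] finite_subset[OF BP fP]] by (metis of_nat_add)
  moreover have "real (card (A \<union> B)) \<le> real (card P)" using fP AP BP by (simp add: card_mono)
  ultimately have "1/8 * real (card P) \<le> real (card (A \<inter> B))"
    using A B by (simp add: algebra_simps)
  also have "card (A \<inter> B) \<le> card {S\<in>P. informative AES n f \<epsilon> (k * 2^t / n) (k * 2^r / n) r i S}"
    using fP by (intro card_mono) (auto simp: A_def B_def informative_def \<theta>\<^sub>1_def \<theta>\<^sub>2_def)
  finally show ?thesis by (simp add: P_def)
qed

theorem mainTheorem1:
  fixes AES :: "nat \<Rightarrow> (nat set \<Rightarrow> bool) \<Rightarrow> nat set \<Rightarrow> nat set \<Rightarrow> nat option pmf"
  shows "\<forall>C>0. \<exists>N. \<forall>n\<ge>N. \<forall>(f :: nat set \<Rightarrow> bool) (\<Lambda>::nat) (\<epsilon>::real) (t::nat) (r::nat) (H::nat) (I::nat set).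
      \<Lambda> \<ge> 1 \<and> 2^\<Lambda> \<le> n \<and> real \<Lambda> \<le> C * ln (real n) \<and>
      \<epsilon> > 0 \<and> t \<in> {1..\<Lambda>} \<and> r \<in> {1..\<Lambda>} \<and> t \<ge> r \<and>
      (\<exists>k. H = 2^k) \<and> real H \<le> C * real n / \<epsilon>^2 \<and>
      real H * 2^t \<ge> sqrt (real n) \<and> real H * 2^r \<ge> sqrt (real n) \<and>
      I \<subseteq> {..<n} \<and> I \<noteq> {} \<and> real (card I) \<ge> real H * \<epsilon>^2 / 2 \<and>
      (\<forall>i\<in>I.
         min (Score AES n f \<Lambda> True i) (Score AES n f \<Lambda> False i) =
           min (ScoreJ AES n f True i t * 2^t / sqrt (real n))
               (ScoreJ AES n f False i r * 2^r / sqrt (real n)) \<and>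
         min (Score AES n f \<Lambda> True i) (Score AES n f \<Lambda> False i) \<in> {1 / real H .. 2 / real H})
      \<longrightarrow>
      (\<forall>i\<in>I.
         real (card {S \<in> Pfam n i t.
                 informative AES n f \<epsilon> (real (card I) * 2^t / real n)
                   (real (card I) * 2^r / real n) r i S})
           \<ge> 1/8 * real (card (Pfam n i t)))"
  \<comment> \<open>The bound holds for every n.\<close>
  apply (intro allI impI exI[of _ "0::nat"] ballI)
  subgoal premises hyp for C n f \<Lambda> \<epsilon> t r H I i
  proof -
    have "1 \<le> n" using hyp(3) le_trans[OF one_le_power] by auto
    moreover have "real (card I) > 0" using hyp(3) finite_subset by (auto simp: card_gt_0_iff)
    moreover have "r \<le> t" and "real H > 0" and "real H * \<epsilon>^2 / 2 \<le> real (card I)"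
      using hyp(3) by auto
    moreover have "1 / real H \<le> min (ScoreJ AES n f True i t * 2^t / sqrt n)
        (ScoreJ AES n f False i r * 2^r / sqrt n)"
      using hyp(3,4) by auto
    ultimately show ?thesis
      by (intro card_informative_ge) auto
  qed
  done

end
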